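(* Let $\gamma(p)$ be the payoff of the greedy strategy $\sigma_*$ from initial belief $p$, and let $d(p)=\gamma(p)-\delta\gamma(\phi(p))$. Assume that $\gamma$ is concave on $\Delta(\Omega)$ and that $d(p)\ge0$ for all $p\in J$. Then $\sigma_*$ is optimal at every initial belief $p_1\in\Delta(\Omega)$.
   Context: Let $\Omega$ be a finite set, identify each $\omega$ with a unit vector of $\mathbb{R}^\Omega$ and $\Delta(\Omega)$ with the unit simplex. Let $M$ be the transition matrix of an irreducible Markov chain on $\Omega$, $r:\Omega\to\mathbb{R}$, $\delta\in[0,1)$, $\phi(q)=qM$. $I=\{p:\sum_\omega p(\omega)r(\omega)\ge0\}$, $J=\Delta(\Omega)\setminus I$. $\mathcal{S}(p)$ is the set of Borel probability measures on $\Delta(\Omega)$ with mean $p$, $\mu_p$ the Dirac mass at $p$. Decision problem from $p_1$: at each stage $n$, at belief $p_n$, the advisor chooses $\mu\in\mathcal{S}(p_n)$ (possibly depending on the past), a posterior $q_n\sim\mu$ is drawn, the stage payoff is $\mathbf{1}_{\{q_n\in I\}}$, and $p_{n+1}=\phi(q_n)$. A strategy's payoff is $\mathbb{E}[(1-\delta)\sum_{n\ge1}\delta^{n-1}\mathbf{1}_{\{q_n\in I\}}]$; $V_\delta(p_1)$ is the maximal payoff; optimal means achieving it. The greedy strategy $\sigma_*$: at $p\in I$ choose $\mu_p$; at $p\in J$ choose a two-point splitting $p=a_Iq_I+a_Jq_J$ (posterior $q_I$ w.p. $a_I$, $q_J$ w.p. $a_J$) maximizing $a_I$ subject to $q_I\in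 I$, $q_J\in\Delta(\Omega)$, $a_I+a_J=1$, $a_I,a_J\ge0$. *)

theory Defs
  imports "HOL-Probability.Probability"
begin

text \<open>States: a finite type 'n. Beliefs: vectors in real^'n. The transition matrix M has
  rows M$i, i.e. M$i$j is the probability of moving from i to j; phi(q) = q M.\<close>

definition prob_simplex :: "(real^'n::finite) set" where
  "prob_simplex = {p. (\<forall>i. 0 \<le> p$i) \<and> (\<Sum>i\<in>UNIV. p$i) = 1}"

definition stochastic_matrix :: "real^'n^'n::finite \<Rightarrow> bool" where
  "stochastic_matrix M \<longleftrightarrow> (\<forall>i j. 0 \<le> M$i$j) \<and> (\<forall>i. (\<Sum>j\<in>UNIV. M$i$j) = 1)"

definition irreducible_matrix :: "real^'n^'n::finite \<Rightarrow> bool" where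
  "irreducible_matrix M \<longleftrightarrow> (\<forall>i j. (i, j) \<in> {(a, b). 0 < M$a$b}\<^sup>*)"

definition phi :: "real^'n^'n::finite \<Rightarrow> real^'n \<Rightarrow> real^'n" where
  "phi M q = q v* M"

definition Iset :: "real^'n::finite \<Rightarrow> (real^'n) set" where
  "Iset r = {p \<in> prob_simplex. 0 \<le> (\<Sum>w\<in>UNIV. p$w * r$w)}"

definition Jset :: "real^'n::finite \<Rightarrow> (real^'n) set" where
  "Jset r = prob_simplex - Iset r"

definition splittings :: "real^'n::finite \<Rightarrow> (real^'n) measure set" where
  "splittings p = {\<mu>. prob_space \<mu> \<and> sets \<mu> = sets borel \<and> (AE x in \<mu>. x \<in> prob_simplex)
      \<and> integrable \<mu> (\<lambda>x. x) \<and> (\<integral>x. x \<partial>\<mu>) = p}"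

text \<open>A (behavioural) strategy maps the history of realised posteriors q_1..q_(n-1) to the
  splitting chosen at stage n. The current belief after history h.\<close>
definition belief :: "real^'n^'n::finite \<Rightarrow> real^'n \<Rightarrow> (real^'n) list \<Rightarrow> real^'n" where
  "belief M p1 h = (if h = [] then p1 else phi M (last h))"

definition strategy :: "real^'n^'n::finite \<Rightarrow> real^'n \<Rightarrow> ((real^'n) list \<Rightarrow> (real^'n) measure) \<Rightarrow> bool" where
  "strategy M p1 \<sigma> \<longleftrightarrow> (\<forall>h. set h \<subseteq> prob_simplex \<longrightarrow> \<sigma> h \<in> splittings (belief M p1 h))"

fun stage_payoff :: "real^'n::finite \<Rightarrow> real \<Rightarrow> ((real^'n) list \<Rightarrow> (real^'n) measure)
    \<Rightarrow> nat \<Rightarrow> (real^'n) list \<Rightarrow> ennreal" where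
  "stage_payoff r \<delta> \<sigma> 0 h = 0"
| "stage_payoff r \<delta> \<sigma> (Suc n) h =
     (\<integral>\<^sup>+ q. (ennreal ((1 - \<delta>) * indicator (Iset r) q) + ennreal \<delta> * stage_payoff r \<delta> \<sigma> n (h @ [q])) \<partial>(\<sigma> h))"

text \<open>Payoff E[(1-delta) sum_n delta^(n-1) 1{q_n in I}] (monotone limit of the truncations).\<close>
definition payoff :: "real^'n::finite \<Rightarrow> real \<Rightarrow> ((real^'n) list \<Rightarrow> (real^'n) measure) \<Rightarrow> ennreal" where
  "payoff r \<delta> \<sigma> = (SUP n. stage_payoff r \<delta> \<sigma> n [])"

definition value_fn :: "real^'n^'n::finite \<Rightarrow> real^'n \<Rightarrow> real \<Rightarrow> real^'n \<Rightarrow> ennreal" where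
  "value_fn M r \<delta> p1 = (SUP \<sigma> \<in> {\<sigma>. strategy M p1 \<sigma>}. payoff r \<delta> \<sigma>)"

definition optimal :: "real^'n^'n::finite \<Rightarrow> real^'n \<Rightarrow> real \<Rightarrow> real^'n
    \<Rightarrow> ((real^'n) list \<Rightarrow> (real^'n) measure) \<Rightarrow> bool" where
  "optimal M r \<delta> p1 \<sigma> \<longleftrightarrow> strategy M p1 \<sigma> \<and> payoff r \<delta> \<sigma> = value_fn M r \<delta> p1"

definition two_point :: "real \<Rightarrow> real^'n::finite \<Rightarrow> real^'n \<Rightarrow> (real^'n) measure" where
  "two_point a qI qJ = distr (measure_pmf (bernoulli_pmf a)) borel (\<lambda>b. if b then qI else qJ)"

definition feasible_split :: "real^'n::finite \<Rightarrow> real^'n \<Rightarrow> real \<Rightarrow> real^'n \<Rightarrow> real \<Rightarrow> real^'n \<Rightarrow> bool" where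
  "feasible_split r p aI qI aJ qJ \<longleftrightarrow> qI \<in> Iset r \<and> qJ \<in> prob_simplex \<and> 0 \<le> aI \<and> 0 \<le> aJ
      \<and> aI + aJ = 1 \<and> p = aI *\<^sub>R qI + aJ *\<^sub>R qJ"

definition greedy_split :: "real^'n::finite \<Rightarrow> real^'n \<Rightarrow> real \<Rightarrow> real^'n \<Rightarrow> real \<Rightarrow> real^'n \<Rightarrow> bool" where
  "greedy_split r p aI qI aJ qJ \<longleftrightarrow> feasible_split r p aI qI aJ qJ
      \<and> (\<forall>aI' qI' aJ' qJ'. feasible_split r p aI' qI' aJ' qJ' \<longrightarrow> aI' \<le> aI)"

definition greedy_selection :: "real^'n::finite \<Rightarrow> (real^'n \<Rightarrow> (real^'n) measure) \<Rightarrow> bool" where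
  "greedy_selection r G \<longleftrightarrow> (\<forall>p \<in> prob_simplex.
      (p \<in> Iset r \<longrightarrow> G p = return borel p) \<and>
      (p \<in> Jset r \<longrightarrow> (\<exists>aI qI aJ qJ. greedy_split r p aI qI aJ qJ \<and> G p = two_point aI qI qJ)))"

definition greedy_strategy :: "real^'n^'n::finite \<Rightarrow> (real^'n \<Rightarrow> (real^'n) measure) \<Rightarrow> real^'n
    \<Rightarrow> ((real^'n) list \<Rightarrow> (real^'n) measure)" where
  "greedy_strategy M G p1 = (\<lambda>h. G (belief M p1 h))"

definition greedy_payoff :: "real^'n^'n::finite \<Rightarrow> real^'n \<Rightarrow> real \<Rightarrow> (real^'n \<Rightarrow> (real^'n) measure)
    \<Rightarrow> real^'n \<Rightarrow> real" where
  "greedy_payoff M r \<delta> G p = enn2real (payoff r \<delta> (greedy_strategy M G p))"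

end

theory Submission
  imports Defs
begin

text \<open>The greedy payoff \<gamma> satisfies the Bellman inequality
  \<open>(1 - \<delta>) 1\<^sub>I(q) + \<delta> \<gamma>(\<phi> q) \<le> \<gamma>(q)\<close> on the whole simplex: with equality on \<open>I\<close>, where the
  greedy strategy stays put, and by the hypothesis \<open>d \<ge> 0\<close> on \<open>J\<close>. Since \<gamma> is concave, Jensen's
  inequality shows that no splitting of the current belief \<open>p\<close> raises the expected value of \<gamma>
  above \<open>\<gamma>(p)\<close>. By induction on the horizon, the truncated payoff of any strategy is therefore at
  most \<gamma> of the current belief, so no strategy beats the greedy one.\<close>

lemma prob_simplex_borel: "prob_simplex \<in> sets (borel :: (real^'n::finite) measure)"
proof -
  have "prob_simplex = (\<Inter>i. {p::real^'n. 0 \<le> p$i}) \<inter> {p. (\<Sum>i\<in>UNIV. p$i) = 1}"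
    unfolding prob_simplex_def by auto
  also have "\<dots> \<in> sets borel" by measurable
  finally show ?thesis .
qed

lemma convex_prob_simplex: "convex (prob_simplex :: (real^'n::finite) set)"
  unfolding convex_def prob_simplex_def by (auto simp: sum.distrib sum_distrib_left[symmetric])

lemma phi_prob_simplex:
  assumes "stochastic_matrix M" "p \<in> prob_simplex"
  shows "phi M p \<in> prob_simplex"
proof -
  have "(\<Sum>j\<in>UNIV. \<Sum>i\<in>UNIV. p$i * M$i$j) = (\<Sum>i\<in>UNIV. p$i * (\<Sum>j\<in>UNIV. M$i$j))"
    by (subst sum.swap) (simp add: sum_distrib_left)
  also have "\<dots> = 1" using assms by (simp add: stochastic_matrix_def prob_simplex_def)
  finally show ?thesis
    using assms unfolding phi_def vector_matrix_mult_def prob_simplex_def stochastic_matrix_def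
    by (auto intro!: sum_nonneg)
qed

lemma belief_prob_simplex:
  assumes "stochastic_matrix M" "p1 \<in> prob_simplex" "set h \<subseteq> prob_simplex"
  shows "belief M p1 h \<in> prob_simplex"
  using assms by (auto simp: belief_def intro!: phi_prob_simplex)

lemma return_in_splittings:
  assumes "p \<in> prob_simplex"
  shows "return borel p \<in> splittings p"
proof -
  have "AE x in return borel p. x \<in> prob_simplex"
    using assms prob_simplex_borel by (subst AE_return) (auto simp: pred_def)
  moreover have "integrable (return borel p) (\<lambda>x. x)"
  proof (rule integrableI_bounded)
    show "(\<lambda>x. x) \<in> borel_measurable (return borel p)"
      by (rule measurable_ident_sets) simp
    have "(\<integral>\<^sup>+ x. ennreal (norm x) \<partial>return borel p) = ennreal (norm p)"
      by (rule nn_integral_return) auto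
    then show "(\<integral>\<^sup>+ x. ennreal (norm x) \<partial>return borel p) < \<infinity>" by simp
  qed
  moreover have "(\<integral>x. x \<partial>return borel p) = p"
    by (rule integral_return) auto
  moreover have "prob_space (return borel p)" by (rule prob_space_return) simp
  ultimately show ?thesis
    by (simp add: splittings_def)
qed

lemma two_point_in_splittings:
  assumes "qI \<in> prob_simplex" "qJ \<in> prob_simplex" "0 \<le> a" "a \<le> 1"
  shows "two_point a qI qJ \<in> splittings (a *\<^sub>R qI + (1 - a) *\<^sub>R qJ)"
proof -
  let ?f = "\<lambda>b::bool. if b then qI else qJ"
  have mf: "?f \<in> measurable (measure_pmf (bernoulli_pmf a)) borel" by simp
  have "prob_space (two_point a qI qJ)"
    unfolding two_point_def by (rule measure_pmf.prob_space_distr[OF mf])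
  moreover have "AE x in two_point a qI qJ. x \<in> prob_simplex"
    unfolding two_point_def using assms prob_simplex_borel
    by (subst AE_distr_iff) (auto simp: pred_def)
  moreover have "integrable (two_point a qI qJ) (\<lambda>x. x)"
    unfolding two_point_def
    by (subst integrable_distr_eq[OF mf]) (auto intro: integrable_measure_pmf_finite)
  moreover have "sets (two_point a qI qJ) = sets borel" by (simp add: two_point_def)
  moreover have "(\<integral>x. x \<partial>two_point a qI qJ) = a *\<^sub>R qI + (1 - a) *\<^sub>R qJ"
  proof -
    have "(\<integral>x. x \<partial>two_point a qI qJ) = (\<integral>b. ?f b \<partial>measure_pmf (bernoulli_pmf a))"
      unfolding two_point_def by (rule integral_distr[OF mf]) simp
    also have "\<dots> = (\<Sum>b\<in>UNIV. pmf (bernoulli_pmf a) b *\<^sub>R ?f b)"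
      by (rule integral_measure_pmf) auto
    also have "\<dots> = a *\<^sub>R qI + (1 - a) *\<^sub>R qJ"
      using assms by (simp add: UNIV_bool)
    finally show ?thesis .
  qed
  ultimately show ?thesis
    unfolding splittings_def by blast
qed

lemma greedy_selection_in_splittings:
  assumes "greedy_selection r G" "p \<in> prob_simplex"
  shows "G p \<in> splittings p"
proof (cases "p \<in> Iset r")
  case True
  then show ?thesis using assms return_in_splittings by (auto simp: greedy_selection_def)
next
  case False
  then have "p \<in> Jset r" using assms by (simp add: Jset_def)
  then obtain aI qI aJ qJ where split: "feasible_split r p aI qI aJ qJ"
    and Gp: "G p = two_point aI qI qJ"
    using assms by (auto simp: greedy_selection_def greedy_split_def)
  then have "qI \<in> prob_simplex" "aJ = 1 - aI" by (auto simp: feasible_split_def Iset_def)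
  with split show ?thesis using two_point_in_splittings[of qI qJ aI] Gp
    by (auto simp: feasible_split_def)
qed

lemma strategy_greedy_strategy:
  assumes "stochastic_matrix M" "greedy_selection r G" "p1 \<in> prob_simplex"
  shows "strategy M p1 (greedy_strategy M G p1)"
  using assms
  by (auto simp: strategy_def greedy_strategy_def intro!: greedy_selection_in_splittings belief_prob_simplex)

subsection \<open>Jensen's inequality for concave functions on the simplex\<close>

text \<open>Separate the point \<open>(p, \<gamma> p + \<epsilon>)\<close> from the hypograph of \<gamma>; prolongability of segments
  beyond \<open>p\<close> rules out a vertical separating hyperplane.\<close>

lemma concave_on_approx_supergradient:
  fixes \<gamma> :: "'a::euclidean_space \<Rightarrow> real"
  assumes cv: "convex F" and cc: "concave_on F \<gamma>" and pF: "p \<in> F" and \<epsilon>: "\<epsilon> > 0"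
    and prolong: "\<And>x. x \<in> F \<Longrightarrow> \<exists>e>0. p - e *\<^sub>R (x - p) \<in> F"
  shows "\<exists>g. \<forall>x\<in>F. \<gamma> x \<le> \<gamma> p + \<epsilon> + g \<bullet> (x - p)"
proof -
  define H where "H = {(x, t). x \<in> F \<and> t \<le> \<gamma> x}"
  define z where "z = (p, \<gamma> p + \<epsilon>)"
  have "convex H"
    unfolding convex_def H_def
  proof clarsimp
    fix x t y s and u v :: real
    assume "x \<in> F" "t \<le> \<gamma> x" "y \<in> F" "s \<le> \<gamma> y" "0 \<le> u" "0 \<le> v" "u + v = 1"
    then show "u *\<^sub>R x + v *\<^sub>R y \<in> F \<and> u * t + v * s \<le> \<gamma> (u *\<^sub>R x + v *\<^sub>R y)"
      using cv cc unfolding convex_def concave_on_iff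
      by (smt (verit, best) mult_left_mono)
  qed
  moreover have "H \<noteq> {}" using pF by (auto simp: H_def)
  moreover have "z \<notin> H" using \<epsilon> by (auto simp: H_def z_def)
  ultimately obtain a b where aff: "z + a \<in> affine hull (insert z H)" and a0: "a \<noteq> 0"
    and az: "a \<bullet> z \<le> b" and aH: "\<And>u. u \<in> H \<Longrightarrow> b \<le> a \<bullet> u"
    using separating_hyperplane_set_point_inaff[of H z] by blast
  define a1 where "a1 = fst a"
  define c where "c = snd a"
  have sep: "a1 \<bullet> p + c * (\<gamma> p + \<epsilon>) \<le> a1 \<bullet> x + c * t" if "x \<in> F" "t \<le> \<gamma> x" for x t
    using aH[of "(x, t)"] az that by (simp add: H_def inner_prod_def a1_def c_def z_def)
  have "c \<le> 0"
    using sep[OF pF, of "\<gamma> p - 1"] \<epsilon> by (smt (verit) mult_le_cancel_left)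
  moreover have "c \<noteq> 0"
  proof
    assume c0: "c = 0"
    text \<open>Then \<open>a1\<close> is minimal at \<open>p\<close> over \<open>F\<close>, hence constant on \<open>F\<close> by prolongation; so the
      affine hull lies in a hyperplane orthogonal to \<open>(a1, 0) = a\<close>, forcing \<open>a = 0\<close>.\<close>
    have ge: "a1 \<bullet> p \<le> a1 \<bullet> y" if "y \<in> F" for y using sep[OF that order_refl] c0 by simp
    have const: "a1 \<bullet> x = a1 \<bullet> p" if xF: "x \<in> F" for x
    proof -
      obtain e where e: "e > 0" "p - e *\<^sub>R (x - p) \<in> F" using prolong[OF xF] by blast
      have "a1 \<bullet> p \<le> a1 \<bullet> p - e * (a1 \<bullet> (x - p))"
        using ge[OF e(2)] by (simp add: inner_diff_right)
      then have "a1 \<bullet> (x - p) \<le> 0" using e(1) by (simp add: mult_le_0_iff)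
      with ge[OF xF] show ?thesis by (simp add: inner_diff_right)
    qed
    define A where "A = {v :: 'a \<times> real. (a1, 0) \<bullet> v = a1 \<bullet> p}"
    have "affine A" unfolding A_def by (rule affine_hyperplane)
    moreover have "insert z H \<subseteq> A"
      using const by (auto simp: A_def H_def z_def inner_prod_def)
    ultimately have "z + a \<in> A" using aff hull_minimal[of "insert z H" A affine] by blast
    then have "a1 \<bullet> a1 = 0" by (simp add: A_def z_def inner_prod_def a1_def inner_add_right)
    then show False using a0 c0 by (simp add: a1_def c_def prod_eq_iff)
  qed
  ultimately have c: "c < 0" by simp
  have "\<gamma> x \<le> \<gamma> p + \<epsilon> + ((- 1 / c) *\<^sub>R a1) \<bullet> (x - p)" if "x \<in> F" for x
  proof -
    have "(\<gamma> x - \<gamma> p - \<epsilon>) * (- c) \<le> a1 \<bullet> x - a1 \<bullet> p"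
      using sep[OF that order_refl] by (simp add: algebra_simps)
    then have "\<gamma> x - \<gamma> p - \<epsilon> \<le> (a1 \<bullet> x - a1 \<bullet> p) / (- c)"
      using c by (simp add: pos_le_divide_eq del: minus_divide_right divide_minus_right)
    moreover have "((- 1 / c) *\<^sub>R a1) \<bullet> (x - p) = (a1 \<bullet> x - a1 \<bullet> p) / (- c)"
      using c by (simp add: inner_diff_right field_simps)
    ultimately show ?thesis by linarith
  qed
  then show ?thesis by blast
qed

lemma concave_on_nn_integral_le:
  fixes \<gamma> :: "'a::euclidean_space \<Rightarrow> real"
  assumes "prob_space \<mu>" "convex F" "concave_on F \<gamma>" and nn: "\<And>x. x \<in> F \<Longrightarrow> 0 \<le> \<gamma> x"
    and AE: "AE x in \<mu>. x \<in> F" and int: "integrable \<mu> (\<lambda>x. x)" and mean: "(\<integral>x. x \<partial>\<mu>) = p"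
    and pF: "p \<in> F" and prolong: "\<And>x. x \<in> F \<Longrightarrow> \<exists>e>0. p - e *\<^sub>R (x - p) \<in> F"
  shows "(\<integral>\<^sup>+ x. ennreal (\<gamma> x) \<partial>\<mu>) \<le> ennreal (\<gamma> p)"
proof (rule ennreal_le_epsilon)
  interpret prob_space \<mu> by fact
  fix \<epsilon> :: real assume \<epsilon>: "0 < \<epsilon>"
  obtain g where g: "\<And>x. x \<in> F \<Longrightarrow> \<gamma> x \<le> \<gamma> p + \<epsilon> + g \<bullet> (x - p)"
    using concave_on_approx_supergradient[OF assms(2,3) pF \<epsilon> prolong] by blast
  let ?h = "\<lambda>x. \<gamma> p + \<epsilon> + g \<bullet> (x - p)"
  have "(\<integral>\<^sup>+ x. ennreal (\<gamma> x) \<partial>\<mu>) \<le> (\<integral>\<^sup>+ x. ennreal (?h x) \<partial>\<mu>)"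
    using AE by (intro nn_integral_mono_AE) (auto elim!: eventually_mono intro!: ennreal_leI g)
  also have "\<dots> = ennreal (\<integral>x. ?h x \<partial>\<mu>)"
  proof (rule nn_integral_eq_integral)
    show "integrable \<mu> ?h"
      using int by (auto intro!: integrable_inner_right simp: inner_diff_right)
    show "AE x in \<mu>. 0 \<le> ?h x"
      using AE by eventually_elim (metis g nn order_trans)
  qed
  also have "(\<integral>x. ?h x \<partial>\<mu>) = \<gamma> p + \<epsilon>"
  proof -
    have "(\<integral>x. ?h x \<partial>\<mu>) = (\<integral>x. (\<gamma> p + \<epsilon> - g \<bullet> p) + g \<bullet> x \<partial>\<mu>)"
      by (simp add: inner_diff_right algebra_simps)
    also have "\<dots> = \<gamma> p + \<epsilon>"
      using int mean by (simp add: integrable_inner_right prob_space)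
    finally show ?thesis .
  qed
  finally show "(\<integral>\<^sup>+ x. ennreal (\<gamma> x) \<partial>\<mu>) \<le> ennreal (\<gamma> p) + ennreal \<epsilon>"
    using \<epsilon> nn[OF pF] by (simp add: ennreal_plus)
qed

text \<open>Splittings of \<open>p\<close> are supported on this face, and \<open>p\<close> is relatively interior to it, as the
  supergradient argument requires (it may not be so in the whole simplex).\<close>

definition simplex_face :: "real^'n::finite \<Rightarrow> (real^'n) set" where
  "simplex_face p = {x \<in> prob_simplex. \<forall>i. p$i = 0 \<longrightarrow> x$i = 0}"

lemma convex_simplex_face: "convex (simplex_face p)"
  using convex_prob_simplex unfolding simplex_face_def convex_def by auto

lemma simplex_face_prolong:
  assumes p: "p \<in> prob_simplex" and x: "x \<in> simplex_face p"
  shows "\<exists>e>0. p - e *\<^sub>R (x - p) \<in> simplex_face p"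
proof -
  define e where "e = Min (insert 1 {p$i | i. 0 < p$i})"
  have "e > 0" unfolding e_def by (subst Min_gr_iff) auto
  have e_le: "e \<le> p$i" if "0 < p$i" for i using that by (auto simp: e_def intro!: Min_le)
  have x_le_1: "x$i \<le> 1" for i
  proof -
    have "x$i \<le> (\<Sum>j\<in>UNIV. x$j)"
      using x by (intro member_le_sum) (auto simp: simplex_face_def prob_simplex_def)
    then show ?thesis using x by (simp add: simplex_face_def prob_simplex_def)
  qed
  have "0 \<le> (p - e *\<^sub>R (x - p))$i" for i
  proof (cases "p$i = 0")
    case True then show ?thesis using x by (simp add: simplex_face_def)
  next
    case False
    then have "e \<le> p$i" using p e_le by (simp add: prob_simplex_def order_less_le)
    moreover have "e * x$i \<le> e" using x_le_1[of i] \<open>e > 0\<close> by (simp add: mult_left_le)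
    moreover have "0 \<le> e * p$i" using \<open>e > 0\<close> p by (simp add: prob_simplex_def)
    ultimately show ?thesis by (simp add: algebra_simps)
  qed
  moreover have "(\<Sum>i\<in>UNIV. (p - e *\<^sub>R (x - p))$i) = (1 + e) * (\<Sum>i\<in>UNIV. p$i) - e * (\<Sum>i\<in>UNIV. x$i)"
    by (simp add: sum_subtractf sum_distrib_left algebra_simps sum.distrib)
  ultimately show ?thesis
    using p x \<open>e > 0\<close> by (auto simp: simplex_face_def prob_simplex_def)
qed

lemma AE_splittings_simplex_face:
  assumes "\<mu> \<in> splittings p"
  shows "AE x in \<mu>. x \<in> simplex_face p"
proof -
  have AE: "AE x in \<mu>. x \<in> prob_simplex" and int: "integrable \<mu> (\<lambda>x. x)"
    and mean: "(\<integral>x. x \<partial>\<mu>) = p"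
    using assms by (auto simp: splittings_def)
  have "AE x in \<mu>. x$i = 0" if "p$i = 0" for i
  proof -
    have int_i: "integrable \<mu> (\<lambda>x. x$i)" and "(\<integral>x. x$i \<partial>\<mu>) = p$i"
      using integrable_inner_right[OF int, of "axis i 1"] integral_inner_right[OF int, of "axis i 1"]
      by (simp_all add: cart_eq_inner_axis inner_commute mean)
    moreover have "AE x in \<mu>. 0 \<le> x$i" using AE by eventually_elim (simp add: prob_simplex_def)
    ultimately show ?thesis using that integral_nonneg_eq_0_iff_AE[OF int_i] by simp
  qed
  then have "AE x in \<mu>. \<forall>i\<in>{i. p$i = 0}. x$i = 0"
    by (intro AE_finite_allI) auto
  with AE show ?thesis by eventually_elim (auto simp: simplex_face_def)
qed

lemma concave_on_prob_simplex_splitting_le: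
  fixes \<gamma> :: "real^'n::finite \<Rightarrow> real"
  assumes "concave_on prob_simplex \<gamma>" "\<And>x. x \<in> prob_simplex \<Longrightarrow> 0 \<le> \<gamma> x"
    and \<mu>: "\<mu> \<in> splittings p" and p: "p \<in> prob_simplex"
  shows "(\<integral>\<^sup>+ x. ennreal (\<gamma> x) \<partial>\<mu>) \<le> ennreal (\<gamma> p)"
proof (rule concave_on_nn_integral_le[OF _ convex_simplex_face _ _ AE_splittings_simplex_face[OF \<mu>]])
  show "concave_on (simplex_face p) \<gamma>"
    using assms(1) unfolding concave_on_def
    by (rule convex_on_subset[OF _ _ convex_simplex_face]) (auto simp: simplex_face_def)
  show "p \<in> simplex_face p" using p by (simp add: simplex_face_def)
  show "0 \<le> \<gamma> x" if "x \<in> simplex_face p" for x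
    using that assms(2) by (simp add: simplex_face_def)
qed (use \<mu> simplex_face_prolong[OF p] in \<open>auto simp: splittings_def\<close>)

lemma stage_payoff_append:
  "stage_payoff r \<delta> \<sigma> n (h0 @ h) = stage_payoff r \<delta> (\<lambda>h'. \<sigma> (h0 @ h')) n h"
  by (induction n arbitrary: h) simp_all

lemma stage_payoff_le_1:
  assumes "strategy M p1 \<sigma>" "0 \<le> \<delta>" "\<delta> \<le> 1" "set h \<subseteq> prob_simplex"
  shows "stage_payoff r \<delta> \<sigma> n h \<le> 1"
  using assms(4)
proof (induction n arbitrary: h)
  case (Suc n)
  have "\<sigma> h \<in> splittings (belief M p1 h)" using assms Suc.prems by (auto simp: strategy_def)
  then have P: "prob_space (\<sigma> h)" and AE: "AE q in \<sigma> h. q \<in> prob_simplex"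
    by (auto simp: splittings_def)
  have "stage_payoff r \<delta> \<sigma> (Suc n) h \<le> (\<integral>\<^sup>+ q. 1 \<partial>\<sigma> h)"
    unfolding stage_payoff.simps
  proof (rule nn_integral_mono_AE)
    show "AE q in \<sigma> h. ennreal ((1 - \<delta>) * indicator (Iset r) q)
        + ennreal \<delta> * stage_payoff r \<delta> \<sigma> n (h @ [q]) \<le> 1"
      using AE
    proof eventually_elim
      case (elim q)
      have "ennreal \<delta> * stage_payoff r \<delta> \<sigma> n (h @ [q]) \<le> ennreal \<delta> * 1"
        using Suc elim by (intro mult_left_mono) auto
      moreover have "ennreal ((1 - \<delta>) * indicator (Iset r) q) \<le> ennreal (1 - \<delta>)"
        using assms by (intro ennreal_leI) (auto simp: indicator_def)
      ultimately have "ennreal ((1 - \<delta>) * indicator (Iset r) q)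
          + ennreal \<delta> * stage_payoff r \<delta> \<sigma> n (h @ [q]) \<le> ennreal (1 - \<delta>) + ennreal \<delta>"
        by (metis add_mono mult.right_neutral)
      also have "\<dots> = 1" using assms by (simp flip: ennreal_plus)
      finally show ?case .
    qed
  qed
  also have "\<dots> = 1" using P by (simp add: prob_space.emeasure_space_1)
  finally show ?case .
qed simp

lemma payoff_le_1:
  assumes "strategy M p1 \<sigma>" "0 \<le> \<delta>" "\<delta> \<le> 1"
  shows "payoff r \<delta> \<sigma> \<le> 1"
  unfolding payoff_def using stage_payoff_le_1[OF assms] by (auto intro: SUP_least)

lemma payoff_greedy_strategy:
  assumes "stochastic_matrix M" "greedy_selection r G" "0 \<le> \<delta>" "\<delta> \<le> 1" "p \<in> prob_simplex"
  shows "payoff r \<delta> (greedy_strategy M G p) = ennreal (greedy_payoff M r \<delta> G p)"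
proof -
  have "payoff r \<delta> (greedy_strategy M G p) < \<top>"
    using payoff_le_1[OF strategy_greedy_strategy[OF assms(1,2,5)] assms(3,4)]
    by (metis ennreal_one_less_top order_le_less_trans)
  then show ?thesis by (simp add: greedy_payoff_def)
qed

text \<open>The integrand need not be measurable in the posterior, so the Dirac integral is evaluated
  through \<open>AE x = q\<close> rather than \<open>nn_integral_return\<close>.\<close>

lemma payoff_return_first:
  assumes "\<sigma> [] = return borel q"
  shows "payoff r \<delta> \<sigma> = ennreal ((1 - \<delta>) * indicator (Iset r) q)
    + ennreal \<delta> * payoff r \<delta> (\<lambda>h. \<sigma> (q # h))"
proof -
  let ?c = "ennreal ((1 - \<delta>) * indicator (Iset r) q)"
  let ?X = "\<lambda>n. stage_payoff r \<delta> (\<lambda>h. \<sigma> (q # h)) n []"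
  have AE: "AE x in return borel q. x = q" by (subst AE_return) (auto simp: pred_def)
  have "stage_payoff r \<delta> \<sigma> (Suc n) [] = (\<integral>\<^sup>+ x. ?c + ennreal \<delta> * ?X n \<partial>return borel q)" for n
    unfolding stage_payoff.simps assms
    by (rule nn_integral_cong_AE, use AE in eventually_elim)
       (simp flip: stage_payoff_append[of _ _ _ _ "[_]" "[]", simplified])
  also have "\<dots> n = ?c + ennreal \<delta> * ?X n" for n
    by (simp add: prob_space.emeasure_space_1 prob_space_return)
  finally have step: "stage_payoff r \<delta> \<sigma> (Suc n) [] = ?c + ennreal \<delta> * ?X n" for n .
  have "payoff r \<delta> \<sigma> = (SUP n. stage_payoff r \<delta> \<sigma> (Suc n) [])"
    unfolding payoff_def by (subst UNIV_nat_eq) (simp add: image_comp bot_ennreal[symmetric])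
  also have "\<dots> = ?c + ennreal \<delta> * payoff r \<delta> (\<lambda>h. \<sigma> (q # h))"
    unfolding step payoff_def by (simp add: SUP_mult_left_ennreal ennreal_SUP_add_right)
  finally show ?thesis .
qed

lemma greedy_payoff_nonneg: "0 \<le> greedy_payoff M r \<delta> G p"
  by (simp add: greedy_payoff_def)

lemma greedy_payoff_Iset:
  assumes "stochastic_matrix M" "greedy_selection r G" "0 \<le> \<delta>" "\<delta> \<le> 1" and q: "q \<in> Iset r"
  shows "greedy_payoff M r \<delta> G q = (1 - \<delta>) + \<delta> * greedy_payoff M r \<delta> G (phi M q)"
proof -
  have qs: "q \<in> prob_simplex" using q by (simp add: Iset_def)
  have first: "greedy_strategy M G q [] = return borel q"
    using assms qs by (simp add: greedy_strategy_def belief_def greedy_selection_def)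
  have shift: "(\<lambda>h. greedy_strategy M G q (q # h)) = greedy_strategy M G (phi M q)"
    by (auto simp: greedy_strategy_def belief_def)
  have "ennreal (greedy_payoff M r \<delta> G q) = payoff r \<delta> (greedy_strategy M G q)"
    using payoff_greedy_strategy[OF assms(1-4) qs] by simp
  also have "\<dots> = ennreal (1 - \<delta>) + ennreal \<delta> * payoff r \<delta> (greedy_strategy M G (phi M q))"
    using payoff_return_first[of "greedy_strategy M G q" q r \<delta>, OF first] q by (simp only: shift) simp
  also have "\<dots> = ennreal ((1 - \<delta>) + \<delta> * greedy_payoff M r \<delta> G (phi M q))"
    using payoff_greedy_strategy[OF assms(1-4) phi_prob_simplex[OF assms(1) qs]] assms
    by (simp add: ennreal_plus ennreal_mult greedy_payoff_nonneg)
  finally have "ennreal (greedy_payoff M r \<delta> G q)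
    = ennreal ((1 - \<delta>) + \<delta> * greedy_payoff M r \<delta> G (phi M q))" .
  moreover have "0 \<le> (1 - \<delta>) + \<delta> * greedy_payoff M r \<delta> G (phi M q)"
    using assms by (simp add: greedy_payoff_nonneg)
  ultimately show ?thesis
    using ennreal_inj greedy_payoff_nonneg by metis
qed

lemma greedy_payoff_bellman_le:
  assumes "stochastic_matrix M" "greedy_selection r G" "0 \<le> \<delta>" "\<delta> \<le> 1"
    and "\<forall>p \<in> Jset r. 0 \<le> greedy_payoff M r \<delta> G p - \<delta> * greedy_payoff M r \<delta> G (phi M p)"
    and "q \<in> prob_simplex"
  shows "(1 - \<delta>) * indicator (Iset r) q + \<delta> * greedy_payoff M r \<delta> G (phi M q)
    \<le> greedy_payoff M r \<delta> G q"
  using assms greedy_payoff_Iset[OF assms(1-4)] by (cases "q \<in> Iset r") (auto simp: Jset_def)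

lemma stage_payoff_le_greedy_payoff:
  assumes M: "stochastic_matrix M" and G: "greedy_selection r G" and "0 \<le> \<delta>" "\<delta> \<le> 1"
    and concave: "concave_on prob_simplex (greedy_payoff M r \<delta> G)"
    and dJ: "\<forall>p \<in> Jset r. 0 \<le> greedy_payoff M r \<delta> G p - \<delta> * greedy_payoff M r \<delta> G (phi M p)"
    and \<sigma>: "strategy M p1 \<sigma>" and p1: "p1 \<in> prob_simplex" and h: "set h \<subseteq> prob_simplex"
  shows "stage_payoff r \<delta> \<sigma> n h \<le> ennreal (greedy_payoff M r \<delta> G (belief M p1 h))"
  using h
proof (induction n arbitrary: h)
  case (Suc n)
  let ?\<gamma> = "greedy_payoff M r \<delta> G"
  have \<mu>: "\<sigma> h \<in> splittings (belief M p1 h)" using \<sigma> Suc.prems by (auto simp: strategy_def)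
  then have AE: "AE q in \<sigma> h. q \<in> prob_simplex" by (auto simp: splittings_def)
  have "stage_payoff r \<delta> \<sigma> (Suc n) h \<le> (\<integral>\<^sup>+ q. ennreal (?\<gamma> q) \<partial>\<sigma> h)"
    unfolding stage_payoff.simps
  proof (rule nn_integral_mono_AE)
    show "AE q in \<sigma> h. ennreal ((1 - \<delta>) * indicator (Iset r) q)
        + ennreal \<delta> * stage_payoff r \<delta> \<sigma> n (h @ [q]) \<le> ennreal (?\<gamma> q)"
      using AE
    proof eventually_elim
      case (elim q)
      have "stage_payoff r \<delta> \<sigma> n (h @ [q]) \<le> ennreal (?\<gamma> (phi M q))"
        using Suc.IH[of "h @ [q]"] Suc.prems elim by (simp add: belief_def)
      then have "ennreal ((1 - \<delta>) * indicator (Iset r) q) + ennreal \<delta> * stage_payoff r \<delta> \<sigma> n (h @ [q])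
          \<le> ennreal ((1 - \<delta>) * indicator (Iset r) q) + ennreal \<delta> * ennreal (?\<gamma> (phi M q))"
        by (intro add_left_mono mult_left_mono) simp_all
      also have "\<dots> = ennreal ((1 - \<delta>) * indicator (Iset r) q + \<delta> * ?\<gamma> (phi M q))"
        using assms by (simp add: ennreal_plus ennreal_mult greedy_payoff_nonneg)
      also have "\<dots> \<le> ennreal (?\<gamma> q)"
        using greedy_payoff_bellman_le[OF M G assms(3,4) dJ elim] by (rule ennreal_leI)
      finally show ?case .
    qed
  qed
  also have "\<dots> \<le> ennreal (?\<gamma> (belief M p1 h))"
    using concave_on_prob_simplex_splitting_le[OF concave greedy_payoff_nonneg \<mu>]
      belief_prob_simplex[OF M p1 Suc.prems] .
  finally show ?case .
qed simp

lemma payoff_le_greedy_payoff: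
  assumes "stochastic_matrix M" "greedy_selection r G" "0 \<le> \<delta>" "\<delta> \<le> 1"
    and "concave_on prob_simplex (greedy_payoff M r \<delta> G)"
    and "\<forall>p \<in> Jset r. 0 \<le> greedy_payoff M r \<delta> G p - \<delta> * greedy_payoff M r \<delta> G (phi M p)"
    and "strategy M p1 \<sigma>" "p1 \<in> prob_simplex"
  shows "payoff r \<delta> \<sigma> \<le> ennreal (greedy_payoff M r \<delta> G p1)"
  unfolding payoff_def using stage_payoff_le_greedy_payoff[OF assms, of "[]"]
  by (auto simp: belief_def intro: SUP_least)

theorem lemma6:
  fixes M :: "real^'n^'n::finite" and r :: "real^'n" and \<delta> :: real
    and G :: "real^'n \<Rightarrow> (real^'n) measure"
  assumes "stochastic_matrix M" and "irreducible_matrix M"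
    and "0 \<le> \<delta>" and "\<delta> < 1"
    and "greedy_selection r G"
    and "concave_on prob_simplex (greedy_payoff M r \<delta> G)"
    and "\<forall>p \<in> Jset r. 0 \<le> greedy_payoff M r \<delta> G p - \<delta> * greedy_payoff M r \<delta> G (phi M p)"
  shows "\<forall>p1 \<in> prob_simplex. optimal M r \<delta> p1 (greedy_strategy M G p1)"
proof
  fix p1 :: "real^'n" assume p1: "p1 \<in> prob_simplex"
  have \<delta>: "\<delta> \<le> 1" using assms by simp
  have greedy: "strategy M p1 (greedy_strategy M G p1)"
    using strategy_greedy_strategy[OF assms(1,5) p1] .
  have "payoff r \<delta> \<sigma> \<le> payoff r \<delta> (greedy_strategy M G p1)" if "strategy M p1 \<sigma>" for \<sigma>
    using payoff_le_greedy_payoff[OF assms(1,5,3) \<delta> assms(6,7) that p1]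
    unfolding payoff_greedy_strategy[OF assms(1,5,3) \<delta> p1] .
  then have "value_fn M r \<delta> p1 = payoff r \<delta> (greedy_strategy M G p1)"
    unfolding value_fn_def using greedy by (intro antisym SUP_least SUP_upper) auto
  with greedy show "optimal M r \<delta> p1 (greedy_strategy M G p1)"
    by (simp add: optimal_def)
qed

end
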